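(* Let $C\ge 1$. If there exists a $C$-competitive online algorithm for $\textsc{Strip-Packing}$, then for every $n$ there exists a $4C$-competitive online algorithm for $\textsc{Online-Sorting}[2C,n]$.
   Context: $\textsc{Strip-Packing}$: pieces are convex polygons arriving one at a time; each must be placed irrevocably, by translation only, inside the strip $[0,\infty)\times[0,1]$, interior-disjoint from previously placed pieces, before the next piece is revealed. The cost is the largest $x$-coordinate of a point of a placed piece. An algorithm $\mathcal A$ is $C$-competitive if $\mathcal A(I)\le C\cdot\mathrm{OPT}(I)$ for every instance $I$, where $\mathrm{OPT}(I)$ is the offline optimal cost. $\textsc{Online-Sorting}[\gamma,n]$: an array of $\gamma n$ initially empty cells; a stream of $n$ reals in $[0,1]$ arrives one at a time and each must be placed irrevocably into an empty cell before the next is revealed. With $r_1,\dots,r_n$ the reals in left-to-right order in the array, $r_0:=0$, $r_{n+1}:=1$, the cost is $\sum_{i=0}^n|r_{i+1}-r_i|$; the offline optimum is $1$, and an algorithm is $\Delta$-competitive if its cost is at most $\Delta$ on every stream. *)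

theory Defs
  imports "HOL-Analysis.Analysis"
begin

definition strip :: "(real \<times> real) set" where
  "strip = {p. 0 \<le> fst p \<and> 0 \<le> snd p \<and> snd p \<le> 1}"

definition translate :: "real \<times> real \<Rightarrow> (real \<times> real) set \<Rightarrow> (real \<times> real) set" where
  "translate t P = (\<lambda>p. t + p) ` P"

definition is_piece :: "(real \<times> real) set \<Rightarrow> bool" where
  "is_piece P \<longleftrightarrow> (\<exists>V. finite V \<and> P = convex hull V) \<and> interior P \<noteq> {}
                   \<and> (\<exists>t. translate t P \<subseteq> strip)"

definition placement_ok :: "(real \<times> real) set list \<Rightarrow> (real \<times> real) list \<Rightarrow> bool" where
  "placement_ok Ps ts \<longleftrightarrow> length ts = length Ps
     \<and> (\<forall>i<length Ps. translate (ts ! i) (Ps ! i) \<subseteq> strip)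
     \<and> (\<forall>i j. i < j \<and> j < length Ps \<longrightarrow>
            interior (translate (ts ! i) (Ps ! i)) \<inter> interior (translate (ts ! j) (Ps ! j)) = {})"

definition packing_cost :: "(real \<times> real) set list \<Rightarrow> (real \<times> real) list \<Rightarrow> real" where
  "packing_cost Ps ts = Sup (fst ` (\<Union>i<length Ps. translate (ts ! i) (Ps ! i)))"

definition strip_OPT :: "(real \<times> real) set list \<Rightarrow> real" where
  "strip_OPT Ps = Inf {packing_cost Ps ts | ts. placement_ok Ps ts}"

text \<open>A deterministic online strip-packing algorithm maps the sequence of pieces revealed so
  far (the last one being the current piece) to the translation applied to the current piece.
  Its placement is thus irrevocable and depends only on the pieces revealed so far.\<close>

type_synonym strip_alg = "(real \<times> real) set list \<Rightarrow> real \<times> real"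

definition online_translations :: "strip_alg \<Rightarrow> (real \<times> real) set list \<Rightarrow> (real \<times> real) list" where
  "online_translations A Ps = map (\<lambda>k. A (take (Suc k) Ps)) [0..<length Ps]"

definition strip_competitive :: "real \<Rightarrow> strip_alg \<Rightarrow> bool" where
  "strip_competitive C A \<longleftrightarrow>
     (\<forall>Ps. Ps \<noteq> [] \<and> (\<forall>P\<in>set Ps. is_piece P) \<longrightarrow>
        placement_ok Ps (online_translations A Ps)
        \<and> packing_cost Ps (online_translations A Ps) \<le> C * strip_OPT Ps)"

text \<open>A deterministic online sorting algorithm maps the reals revealed so far (the last one
  being the current real) to the (0-based) index of the cell receiving the current real.\<close>

type_synonym sort_alg = "real list \<Rightarrow> nat"

definition num_cells :: "real \<Rightarrow> nat \<Rightarrow> nat" where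
  "num_cells \<gamma> n = nat \<lfloor>\<gamma> * real n\<rfloor>"

definition sort_positions :: "sort_alg \<Rightarrow> real list \<Rightarrow> nat list" where
  "sort_positions alg xs = map (\<lambda>k. alg (take (Suc k) xs)) [0..<length xs]"

definition sort_valid :: "real \<Rightarrow> nat \<Rightarrow> sort_alg \<Rightarrow> real list \<Rightarrow> bool" where
  "sort_valid \<gamma> n alg xs \<longleftrightarrow>
     (\<forall>p\<in>set (sort_positions alg xs). p < num_cells \<gamma> n) \<and> distinct (sort_positions alg xs)"

fun path_len :: "real list \<Rightarrow> real" where
  "path_len (a # b # rest) = \<bar>b - a\<bar> + path_len (b # rest)"
| "path_len _ = 0"

definition sorted_contents :: "sort_alg \<Rightarrow> real list \<Rightarrow> real list" where
  "sorted_contents alg xs =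
     map (\<lambda>k. xs ! k) (sort_key (\<lambda>k. sort_positions alg xs ! k) [0..<length xs])"

definition sort_cost :: "sort_alg \<Rightarrow> real list \<Rightarrow> real" where
  "sort_cost alg xs = path_len (0 # sorted_contents alg xs @ [1])"

definition sort_competitive :: "real \<Rightarrow> nat \<Rightarrow> real \<Rightarrow> sort_alg \<Rightarrow> bool" where
  "sort_competitive \<gamma> n \<Delta> alg \<longleftrightarrow>
     (\<forall>xs. length xs = n \<and> (\<forall>x\<in>set xs. 0 \<le> x \<and> x \<le> 1) \<longrightarrow>
        sort_valid \<gamma> n alg xs \<and> sort_cost alg xs \<le> \<Delta>)"

end

(*
  A real s in [0,1] is encoded as the parallelogram of height 1 and width w = 1/n whose bottom
  edge is [0,w] and whose top edge is shifted right by s. Such a piece can only be translated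
  horizontally inside the strip, and two of them with disjoint interiors are at horizontal
  distance at least w from each other both along the bottom and along the top edge. Offline, the
  n pieces placed side by side in order of increasing s cost n w + 1 = 2, so a C-competitive
  packer keeps every piece left of 2C. Storing s in cell floor(n a), where a is the offset of its
  piece, therefore uses fewer than 2Cn cells injectively. Reading the cells from left to right,
  consecutive offsets grow by at least w plus the amount by which the stored value decreases, so
  the total descent is at most 2C - n w = 2C - 1; the path length, which is 1 plus twice the
  descent, is at most 4C - 1.
*)

theory Submission
  imports Defs
begin

section \<open>Parallelogram pieces\<close>

lemma mem_translate: "q \<in> translate t P \<longleftrightarrow> q - t \<in> P"
  unfolding translate_def by (auto simp: image_iff intro: bexI[of _ "q - t"])

definition parallelogram :: "real \<Rightarrow> real \<Rightarrow> (real \<times> real) set" where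
  "parallelogram w s = {p. 0 \<le> snd p \<and> snd p \<le> 1 \<and> s * snd p \<le> fst p \<and> fst p \<le> s * snd p + w}"

lemma parallelogram_eq_linear_image:
  assumes "w > 0"
  shows "parallelogram w s = (\<lambda>(u, y). (w * u + s * y, y)) ` cbox (0, 0) (1, 1)"
proof (intro equalityI subsetI)
  fix p assume "p \<in> parallelogram w s"
  with assms show "p \<in> (\<lambda>(u, y). (w * u + s * y, y)) ` cbox (0, 0) (1, 1)"
    by (auto simp: parallelogram_def image_iff field_simps
             intro!: bexI[of _ "((fst p - s * snd p) / w, snd p)"])
qed (use assms in \<open>auto simp: parallelogram_def\<close>)

lemma linear_shear: "linear (\<lambda>(u, y). (w * u + s * y :: real, y :: real))"
  by (rule linearI) (auto simp: algebra_simps)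

definition open_parallelogram :: "real \<Rightarrow> real \<Rightarrow> (real \<times> real) set" where
  "open_parallelogram w s = {p. 0 < snd p \<and> snd p < 1 \<and> s * snd p < fst p \<and> fst p < s * snd p + w}"

lemma open_parallelogram_subset_interior:
  "open_parallelogram w s \<subseteq> interior (parallelogram w s)"
proof (rule interior_maximal)
  show "open (open_parallelogram w s)"
    unfolding open_parallelogram_def Collect_conj_eq
    by (intro open_Int open_Collect_less continuous_intros)
qed (auto simp: open_parallelogram_def parallelogram_def)

lemma translate_open_parallelogram_subset_interior:
  "translate t (open_parallelogram w s) \<subseteq> interior (translate t (parallelogram w s))"
  unfolding translate_def interior_translation
  by (rule image_mono[OF open_parallelogram_subset_interior])

lemma translate_parallelogram_subset_strip:
  assumes "0 \<le> a" "0 \<le> s"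
  shows "translate (a, 0) (parallelogram w s) \<subseteq> strip"
proof
  fix q assume "q \<in> translate (a, 0) (parallelogram w s)"
  then have "0 \<le> snd q" "snd q \<le> 1" "a + s * snd q \<le> fst q"
    by (auto simp: mem_translate parallelogram_def)
  moreover have "0 \<le> s * snd q"
    using \<open>0 \<le> s\<close> \<open>0 \<le> snd q\<close> by simp
  ultimately show "q \<in> strip"
    using \<open>0 \<le> a\<close> by (simp add: strip_def)
qed

lemma is_piece_parallelogram:
  assumes "w > 0" "0 \<le> s"
  shows "is_piece (parallelogram w s)"
  unfolding is_piece_def
proof (intro conjI)
  obtain V where "finite V" "cbox (0::real, 0::real) (1, 1) = convex hull V"
    using closed_interval_as_convex_hull by blast
  then show "\<exists>V. finite V \<and> parallelogram w s = convex hull V"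
    using assms by (auto simp: parallelogram_eq_linear_image convex_hull_linear_image[OF linear_shear])
  have "(s/2 + w/2, 1/2) \<in> open_parallelogram w s"
    using assms by (simp add: open_parallelogram_def)
  then show "interior (parallelogram w s) \<noteq> {}"
    using open_parallelogram_subset_interior by blast
  show "\<exists>t. translate t (parallelogram w s) \<subseteq> strip"
    using translate_parallelogram_subset_strip[of 0 s w] assms by blast
qed

text \<open>A pair (a, s) stands for the parallelogram of slope s translated by (a, 0).\<close>

definition left_of :: "real \<Rightarrow> real \<times> real \<Rightarrow> real \<times> real \<Rightarrow> bool" where
  "left_of w p q \<longleftrightarrow> fst p + w \<le> fst q \<and> fst p + snd p + w \<le> fst q + snd q"

lemma affine_abs_ge_same_sign:
  fixes d0 d1 w :: real
  assumes "w > 0" and far: "\<And>y. 0 < y \<Longrightarrow> y < 1 \<Longrightarrow> w \<le> \<bar>(1 - y) * d0 + y * d1\<bar>"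
  shows "(w \<le> d0 \<and> w \<le> d1) \<or> (d0 \<le> -w \<and> d1 \<le> -w)"
proof -
  have "closed {y. w \<le> \<bar>(1 - y) * d0 + y * d1\<bar>}"
    by (intro closed_Collect_le continuous_intros)
  then have "closure {0<..<1} \<subseteq> {y. w \<le> \<bar>(1 - y) * d0 + y * d1\<bar>}"
    using far by (intro closure_minimal) auto
  then have "w \<le> \<bar>(1 - y) * d0 + y * d1\<bar>" if "0 \<le> y" "y \<le> 1" for y
    using that by auto
  from this[of 0] this[of 1] have "w \<le> \<bar>d0\<bar>" "w \<le> \<bar>d1\<bar>"
    by simp_all
  moreover have False if "(0 < d0 \<and> d1 < 0) \<or> (d0 < 0 \<and> 0 < d1)"
  proof -
    define y where "y = d0 / (d0 - d1)"
    have "0 < y" "y < 1"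
      using that by (auto simp: y_def zero_less_divide_iff divide_less_eq_1)
    moreover have "(1 - y) * d0 + y * d1 = 0"
      using that by (auto simp: y_def field_simps)
    ultimately show False
      using far[of y] \<open>w > 0\<close> by simp
  qed
  ultimately show ?thesis
    using \<open>w > 0\<close> by (auto simp: abs_if split: if_splits)
qed

lemma disjoint_interiors_imp_left_of:
  assumes "w > 0"
    and disj: "interior (translate (a1, 0) (parallelogram w s1))
             \<inter> interior (translate (a2, 0) (parallelogram w s2)) = {}"
  shows "left_of w (a1, s1) (a2, s2) \<or> left_of w (a2, s2) (a1, s1)"
proof -
  \<comment> \<open>at height y the open slices of the two pieces have length w and are disjoint\<close>
  have "w \<le> \<bar>(1 - y) * (a2 - a1) + y * ((a2 + s2) - (a1 + s1))\<bar>" if "0 < y" "y < 1" for y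
  proof (rule ccontr)
    assume "\<not> ?thesis"
    then have close: "\<bar>(a2 + s2 * y) - (a1 + s1 * y)\<bar> < w"
      by (simp add: algebra_simps)
    define x where "x = (a1 + s1 * y + a2 + s2 * y + w) / 2"
    have "a1 + s1 * y < x" "x < a1 + s1 * y + w" "a2 + s2 * y < x" "x < a2 + s2 * y + w"
      using close by (auto simp: x_def abs_less_iff field_simps)
    then have "(x, y) \<in> translate (a1, 0) (open_parallelogram w s1)"
              "(x, y) \<in> translate (a2, 0) (open_parallelogram w s2)"
      using that by (auto simp: mem_translate open_parallelogram_def)
    then show False
      using disj translate_open_parallelogram_subset_interior by blast
  qed
  from affine_abs_ge_same_sign[OF \<open>w > 0\<close> this] show ?thesis
    unfolding left_of_def by auto
qed

lemma interior_graph_empty: "interior {p :: real \<times> real. fst p = f (snd p)} = {}"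
proof -
  have False if p: "p \<in> interior {p. fst p = f (snd p)}" for p
  proof -
    obtain e where "e > 0" and ball: "ball p e \<subseteq> {p. fst p = f (snd p)}"
      using p unfolding mem_interior by blast
    have "(fst p + e / 2, snd p) \<in> ball p e"
      using \<open>e > 0\<close> by (cases p) (simp add: dist_Pair_Pair dist_real_def)
    with ball have "fst p + e / 2 = f (snd p)"
      by auto
    moreover have "fst p = f (snd p)"
      using ball centre_in_ball[of p e] \<open>e > 0\<close> by blast
    ultimately show False
      using \<open>e > 0\<close> by simp
  qed
  then show ?thesis
    by auto
qed

lemma left_of_imp_disjoint_interiors:
  assumes "left_of w (a1, s1) (a2, s2)"
  shows "interior (translate (a1, 0) (parallelogram w s1))
       \<inter> interior (translate (a2, 0) (parallelogram w s2)) = {}"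
proof -
  have "translate (a1, 0) (parallelogram w s1) \<inter> translate (a2, 0) (parallelogram w s2)
        \<subseteq> {p. fst p = a2 + s2 * snd p}"
  proof
    fix p assume "p \<in> translate (a1, 0) (parallelogram w s1) \<inter> translate (a2, 0) (parallelogram w s2)"
    then have y: "0 \<le> snd p" "snd p \<le> 1" and "fst p \<le> a1 + s1 * snd p + w" "a2 + s2 * snd p \<le> fst p"
      by (auto simp: mem_translate parallelogram_def)
    moreover have "a1 + s1 * snd p + w \<le> a2 + s2 * snd p"
    proof -
      have "(1 - snd p) * (a1 + w) \<le> (1 - snd p) * a2" "snd p * (a1 + s1 + w) \<le> snd p * (a2 + s2)"
        using assms y by (simp_all add: left_of_def mult_left_mono)
      then show ?thesis
        by (simp add: algebra_simps)
    qed
    ultimately have "fst p = a2 + s2 * snd p"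
      by linarith
    then show "p \<in> {p. fst p = a2 + s2 * snd p}"
      by simp
  qed
  from interior_mono[OF this] show ?thesis
    using interior_graph_empty[of "\<lambda>y. a2 + s2 * y"] by simp
qed

lemma is_piece_bounded: "is_piece P \<Longrightarrow> bounded P"
  unfolding is_piece_def by (metis compact_convex_hull finite_imp_compact compact_imp_bounded)

lemma is_piece_nonempty: "is_piece P \<Longrightarrow> P \<noteq> {}"
  unfolding is_piece_def using interior_subset by blast

lemma packing_cost_upper:
  assumes "\<forall>P\<in>set Ps. is_piece P" "i < length Ps" "q \<in> translate (ts ! i) (Ps ! i)"
  shows "fst q \<le> packing_cost Ps ts"
proof -
  have "bounded (translate (ts ! i) (Ps ! i))" if "i < length Ps" for i
    using that assms(1) is_piece_bounded[of "Ps ! i"]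
    by (auto simp: translate_def intro: bounded_translation)
  then have "bounded (fst ` (\<Union>i<length Ps. translate (ts ! i) (Ps ! i)))"
    by (intro bounded_linear_image bounded_linear_fst) auto
  moreover have "fst q \<in> fst ` (\<Union>i<length Ps. translate (ts ! i) (Ps ! i))"
    using assms(2,3) by blast
  ultimately show ?thesis
    unfolding packing_cost_def by (intro cSup_upper bounded_imp_bdd_above)
qed

lemma packing_cost_least:
  assumes "\<forall>P\<in>set Ps. is_piece P" "Ps \<noteq> []"
    and "\<And>i q. i < length Ps \<Longrightarrow> q \<in> translate (ts ! i) (Ps ! i) \<Longrightarrow> fst q \<le> c"
  shows "packing_cost Ps ts \<le> c"
  unfolding packing_cost_def
proof (rule cSup_least)
  obtain p where "p \<in> Ps ! 0"
    using assms(1,2) is_piece_nonempty[of "Ps ! 0"] by fastforce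
  then have "ts ! 0 + p \<in> translate (ts ! 0) (Ps ! 0)"
    by (simp add: mem_translate)
  then show "fst ` (\<Union>i<length Ps. translate (ts ! i) (Ps ! i)) \<noteq> {}"
    using assms(2) by blast
qed (use assms(3) in auto)

lemma packing_cost_nonneg:
  assumes "\<forall>P\<in>set Ps. is_piece P" "Ps \<noteq> []" "placement_ok Ps ts"
  shows "0 \<le> packing_cost Ps ts"
proof -
  obtain p where "p \<in> Ps ! 0"
    using assms(1,2) is_piece_nonempty[of "Ps ! 0"] by fastforce
  then have q: "ts ! 0 + p \<in> translate (ts ! 0) (Ps ! 0)"
    by (simp add: mem_translate)
  moreover have "translate (ts ! 0) (Ps ! 0) \<subseteq> strip"
    using assms(2,3) by (simp add: placement_ok_def)
  ultimately have "ts ! 0 + p \<in> strip"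
    by blast
  then have "0 \<le> fst (ts ! 0 + p)"
    by (simp add: strip_def)
  also have "\<dots> \<le> packing_cost Ps ts"
    using assms(1,2) q by (intro packing_cost_upper) auto
  finally show ?thesis .
qed

lemma strip_OPT_le:
  assumes "\<forall>P\<in>set Ps. is_piece P" "Ps \<noteq> []" "placement_ok Ps ts"
  shows "strip_OPT Ps \<le> packing_cost Ps ts"
  unfolding strip_OPT_def
proof (rule cInf_lower)
  show "bdd_below {packing_cost Ps ts |ts. placement_ok Ps ts}"
    using packing_cost_nonneg[OF assms(1,2)] by (auto intro!: bdd_belowI[of _ 0])
qed (use assms(3) in blast)

lemma translate_parallelogram_subset_stripD:
  assumes "0 \<le> w" and "translate (a, b) (parallelogram w s) \<subseteq> strip"
  shows "b = 0" and "0 \<le> a"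
proof -
  have "(a, b) \<in> translate (a, b) (parallelogram w s)"
    and "(a + s, b + 1) \<in> translate (a, b) (parallelogram w s)"
    using assms(1) by (simp_all add: mem_translate parallelogram_def)
  then have "(a, b) \<in> strip" "(a + s, b + 1) \<in> strip"
    using assms(2) by blast+
  then show "b = 0" "0 \<le> a"
    by (simp_all add: strip_def)
qed

lemma placement_ok_interiors_disjoint:
  assumes "placement_ok Ps ts" "i < length Ps" "j < length Ps" "i \<noteq> j"
  shows "interior (translate (ts ! i) (Ps ! i)) \<inter> interior (translate (ts ! j) (Ps ! j)) = {}"
proof (cases "i < j")
  case True
  then show ?thesis
    using assms by (simp add: placement_ok_def)
next
  case False
  then have "interior (translate (ts ! j) (Ps ! j)) \<inter> interior (translate (ts ! i) (Ps ! i)) = {}"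
    using assms by (simp add: placement_ok_def)
  then show ?thesis
    by (simp only: Int_commute)
qed

definition sort_rank :: "(nat \<Rightarrow> real) \<Rightarrow> nat \<Rightarrow> nat \<Rightarrow> nat" where
  "sort_rank s n k = card {j. j < n \<and> (s j < s k \<or> (s j = s k \<and> j < k))}"

lemma sort_rank_less:
  assumes "i < n" "s i < s j \<or> (s i = s j \<and> i < j)"
  shows "sort_rank s n i < sort_rank s n j"
  unfolding sort_rank_def using assms by (intro psubset_card_mono) auto

lemma sort_rank_le:
  assumes "k < n"
  shows "sort_rank s n k \<le> n - 1"
proof -
  have "{j. j < n \<and> (s j < s k \<or> (s j = s k \<and> j < k))} \<subseteq> {..<n} - {k}"
    by auto
  then have "sort_rank s n k \<le> card ({..<n} - {k})"
    unfolding sort_rank_def by (intro card_mono) auto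
  then show ?thesis
    using assms by simp
qed

definition sorted_placement :: "real \<Rightarrow> real list \<Rightarrow> (real \<times> real) list" where
  "sorted_placement w xs = map (\<lambda>k. (real (sort_rank ((!) xs) (length xs) k) * w, 0)) [0..<length xs]"

context
  fixes w :: real and xs :: "real list"
  assumes w: "w > 0" and unit: "\<forall>x\<in>set xs. 0 \<le> x \<and> x \<le> 1"
begin

private abbreviation "slot k \<equiv> real (sort_rank ((!) xs) (length xs) k) * w"

lemma sorted_placement_nth: "k < length xs \<Longrightarrow> sorted_placement w xs ! k = (slot k, 0)"
  by (simp add: sorted_placement_def)

lemma sorted_placement_ok: "placement_ok (map (parallelogram w) xs) (sorted_placement w xs)"
  unfolding placement_ok_def
proof (intro conjI allI impI)
  show "length (sorted_placement w xs) = length (map (parallelogram w) xs)"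
    by (simp add: sorted_placement_def)
next
  fix i assume "i < length (map (parallelogram w) xs)"
  then show "translate (sorted_placement w xs ! i) (map (parallelogram w) xs ! i) \<subseteq> strip"
    using unit w by (simp add: sorted_placement_nth translate_parallelogram_subset_strip)
next
  have disjoint: "interior (translate (slot i, 0) (parallelogram w (xs ! i)))
      \<inter> interior (translate (slot j, 0) (parallelogram w (xs ! j))) = {}"
    if "i < length xs" "xs ! i < xs ! j \<or> (xs ! i = xs ! j \<and> i < j)" for i j
  proof (rule left_of_imp_disjoint_interiors)
    have "sort_rank ((!) xs) (length xs) i + 1 \<le> sort_rank ((!) xs) (length xs) j"
      using sort_rank_less[OF that] by simp
    then have "(real (sort_rank ((!) xs) (length xs) i) + 1) * w \<le> slot j"
      using w by (intro mult_right_mono) linarith+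
    then have "slot i + w \<le> slot j"
      by (simp add: algebra_simps)
    moreover have "xs ! i \<le> xs ! j"
      using that by auto
    ultimately show "left_of w (slot i, xs ! i) (slot j, xs ! j)"
      by (simp add: left_of_def)
  qed
  fix i j assume ij: "i < j \<and> j < length (map (parallelogram w) xs)"
  consider "xs ! i \<le> xs ! j" | "xs ! j < xs ! i"
    by linarith
  then show "interior (translate (sorted_placement w xs ! i) (map (parallelogram w) xs ! i))
      \<inter> interior (translate (sorted_placement w xs ! j) (map (parallelogram w) xs ! j)) = {}"
  proof cases
    case 1
    then have "xs ! i < xs ! j \<or> (xs ! i = xs ! j \<and> i < j)"
      using ij by auto
    then show ?thesis
      using disjoint[of i j] ij by (simp add: sorted_placement_nth)
  next
    case 2
    then show ?thesis
      using disjoint[of j i] ij by (simp add: sorted_placement_nth Int_commute)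
  qed
qed

lemma sorted_placement_cost:
  assumes "xs \<noteq> []"
  shows "packing_cost (map (parallelogram w) xs) (sorted_placement w xs) \<le> real (length xs) * w + 1"
proof (rule packing_cost_least)
  show "\<forall>P\<in>set (map (parallelogram w) xs). is_piece P"
    using unit w by (auto intro: is_piece_parallelogram)
next
  fix i q assume i: "i < length (map (parallelogram w) xs)"
    and "q \<in> translate (sorted_placement w xs ! i) (map (parallelogram w) xs ! i)"
  then have "0 \<le> snd q" "snd q \<le> 1" "fst q \<le> slot i + xs ! i * snd q + w"
    by (auto simp: sorted_placement_nth mem_translate parallelogram_def)
  moreover have "xs ! i * snd q \<le> 1"
    using i unit \<open>0 \<le> snd q\<close> \<open>snd q \<le> 1\<close> by (auto intro: mult_le_one)
  moreover have "slot i \<le> real (length xs - 1) * w"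
    using i w sort_rank_le[of i "length xs" "(!) xs"] by (intro mult_right_mono) simp_all
  moreover have "real (length xs - 1) * w + w = real (length xs) * w"
    using assms by (cases xs) (simp_all add: algebra_simps)
  ultimately show "fst q \<le> real (length xs) * w + 1"
    by linarith
qed (use assms in simp)

lemma strip_OPT_parallelograms_le:
  assumes "xs \<noteq> []"
  shows "strip_OPT (map (parallelogram w) xs) \<le> real (length xs) * w + 1"
proof -
  have "\<forall>P\<in>set (map (parallelogram w) xs). is_piece P"
    using unit w by (auto intro: is_piece_parallelogram)
  then show ?thesis
    using strip_OPT_le[OF _ _ sorted_placement_ok] sorted_placement_cost[OF assms] assms
    by fastforce
qed

end

section \<open>Sorting along a chain of pieces\<close>

lemma path_len_left_of_chain:
  assumes "sorted_wrt (left_of w) (p # ps)" and "\<forall>q\<in>set (p # ps). snd q \<le> 1"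
  shows "path_len (map snd (p # ps) @ [1])
           \<le> 1 - snd p + 2 * (fst (last (p # ps)) - fst p - real (length ps) * w)"
  using assms
proof (induction ps arbitrary: p)
  case Nil
  then show ?case
    by simp
next
  case (Cons q ps)
  have IH: "path_len (map snd (q # ps) @ [1])
             \<le> 1 - snd q + 2 * (fst (last (q # ps)) - fst q - real (length ps) * w)"
    using Cons.prems by (intro Cons.IH) auto
  have "left_of w p q"
    using Cons.prems by simp
  then have "\<bar>snd q - snd p\<bar> - snd q + snd p \<le> 2 * (fst q - fst p - w)"
    by (auto simp: left_of_def abs_if)
  then show ?case
    using IH by (simp add: algebra_simps)
qed

lemma path_len_left_of_chain_le:
  assumes "sorted_wrt (left_of w) ps" "ps \<noteq> []"
    and bounds: "\<forall>q\<in>set ps. 0 \<le> fst q \<and> 0 \<le> snd q \<and> snd q \<le> 1 \<and> fst q + snd q + w \<le> B"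
  shows "path_len (0 # map snd ps @ [1]) \<le> 1 + 2 * (B - real (length ps) * w)"
proof -
  obtain p ps' where ps: "ps = p # ps'"
    using assms(2) by (cases ps) auto
  have "path_len (0 # map snd ps @ [1]) = snd p + path_len (map snd (p # ps') @ [1])"
    using bounds by (simp add: ps)
  also have "\<dots> \<le> 1 + 2 * (fst (last (p # ps')) - fst p - real (length ps') * w)"
    using path_len_left_of_chain[of w p ps'] assms by (simp add: ps)
  also have "\<dots> \<le> 1 + 2 * (B - real (length ps) * w)"
    using bounds last_in_set[of ps] by (fastforce simp: ps algebra_simps)
  finally show ?thesis .
qed

lemma nat_floor_less_nat_floor:
  assumes "0 \<le> x" "x + 1 \<le> y"
  shows "nat \<lfloor>x\<rfloor> < nat \<lfloor>y\<rfloor>"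
proof -
  have "\<lfloor>x\<rfloor> + 1 \<le> \<lfloor>y\<rfloor>" "0 \<le> \<lfloor>x\<rfloor>"
    using floor_mono[OF assms(2)] assms(1) by simp_all
  then show ?thesis
    by linarith
qed

section \<open>From strip packing to online sorting\<close>

definition strip_sort :: "strip_alg \<Rightarrow> nat \<Rightarrow> sort_alg" where
  "strip_sort A n ys = nat \<lfloor>real n * fst (A (map (parallelogram (1 / real n)) ys))\<rfloor>"

context
  fixes A :: strip_alg and C :: real and xs :: "real list"
  assumes competitive: "strip_competitive C A" and "0 \<le> C"
    and xs_ne: "xs \<noteq> []" and unit: "\<forall>x\<in>set xs. 0 \<le> x \<and> x \<le> 1"
begin

private abbreviation "n \<equiv> length xs"
private definition w :: real where "w = 1 / real n"
private abbreviation "pieces \<equiv> map (parallelogram w) xs"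
private definition offset :: "nat \<Rightarrow> real" where
  "offset k = fst (online_translations A pieces ! k)"
private definition cell :: "nat \<Rightarrow> nat" where "cell k = nat \<lfloor>real n * offset k\<rfloor>"

private lemma w_pos: "w > 0" and n_w: "real n * w = 1"
  using xs_ne by (simp_all add: w_def)

private lemma pieces_are_pieces: "\<forall>P\<in>set pieces. is_piece P"
  using unit w_pos by (auto intro: is_piece_parallelogram)

private lemma online_placement_ok: "placement_ok pieces (online_translations A pieces)"
  and online_cost_le: "packing_cost pieces (online_translations A pieces) \<le> 2 * C"
proof -
  have "placement_ok pieces (online_translations A pieces)"
    and cost: "packing_cost pieces (online_translations A pieces) \<le> C * strip_OPT pieces"
    using competitive pieces_are_pieces xs_ne by (auto simp: strip_competitive_def)
  moreover have "C * strip_OPT pieces \<le> C * 2"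
    using strip_OPT_parallelograms_le[OF w_pos unit xs_ne] n_w \<open>0 \<le> C\<close>
    by (intro mult_left_mono) simp_all
  ultimately show "placement_ok pieces (online_translations A pieces)"
    and "packing_cost pieces (online_translations A pieces) \<le> 2 * C"
    by simp_all
qed

private lemma online_translation_nth:
  assumes "k < n"
  shows "online_translations A pieces ! k = (offset k, 0)" and "0 \<le> offset k"
proof -
  obtain a b where ab: "online_translations A pieces ! k = (a, b)"
    by fastforce
  have "translate (online_translations A pieces ! k) (pieces ! k) \<subseteq> strip"
    using online_placement_ok assms by (simp add: placement_ok_def)
  then have "translate (a, b) (parallelogram w (xs ! k)) \<subseteq> strip"
    using ab assms by simp
  with w_pos have "b = 0" "0 \<le> a"
    using translate_parallelogram_subset_stripD by (meson less_imp_le)+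
  with ab show "online_translations A pieces ! k = (offset k, 0)" "0 \<le> offset k"
    by (simp_all add: offset_def)
qed

private lemma offsets_left_of:
  assumes "i < n" "j < n" "i \<noteq> j"
  shows "left_of w (offset i, xs ! i) (offset j, xs ! j) \<or> left_of w (offset j, xs ! j) (offset i, xs ! i)"
proof -
  have "interior (translate (online_translations A pieces ! i) (pieces ! i))
      \<inter> interior (translate (online_translations A pieces ! j) (pieces ! j)) = {}"
    using placement_ok_interiors_disjoint[OF online_placement_ok, of i j] assms
    by simp
  then have "interior (translate (offset i, 0) (parallelogram w (xs ! i)))
      \<inter> interior (translate (offset j, 0) (parallelogram w (xs ! j))) = {}"
    using assms by (simp add: online_translation_nth)
  then show ?thesis
    by (rule disjoint_interiors_imp_left_of[OF w_pos])
qed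

private lemma offset_upper:
  assumes "k < n"
  shows "offset k + xs ! k + w \<le> 2 * C"
proof -
  have "(offset k + xs ! k + w, 1) \<in> translate (online_translations A pieces ! k) (pieces ! k)"
    using assms w_pos by (simp add: online_translation_nth mem_translate parallelogram_def)
  then have "offset k + xs ! k + w \<le> packing_cost pieces (online_translations A pieces)"
    using packing_cost_upper[OF pieces_are_pieces] assms by fastforce
  then show ?thesis
    using online_cost_le by simp
qed

private lemma strip_sort_positions: "sort_positions (strip_sort A n) xs = map cell [0..<n]"
  by (simp add: sort_positions_def strip_sort_def cell_def offset_def w_def online_translations_def take_map)

private lemma cell_less:
  assumes "i < n" "j < n" "offset i < offset j"
  shows "cell i < cell j"
  unfolding cell_def
proof (rule nat_floor_less_nat_floor)
  have "\<not> left_of w (offset j, xs ! j) (offset i, xs ! i)"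
    using assms(3) w_pos by (auto simp: left_of_def)
  then have "offset i + w \<le> offset j"
    using offsets_left_of[OF assms(1,2)] assms(3) by (auto simp: left_of_def)
  then have "real n * (offset i + w) \<le> real n * offset j"
    by (intro mult_left_mono) simp_all
  then show "real n * offset i + 1 \<le> real n * offset j"
    using n_w by (simp add: algebra_simps)
qed (use online_translation_nth(2)[OF assms(1)] in simp)

private lemma cell_less_imp_left_of:
  assumes "i < n" "j < n" "cell i < cell j"
  shows "left_of w (offset i, xs ! i) (offset j, xs ! j)"
proof -
  have "\<not> left_of w (offset j, xs ! j) (offset i, xs ! i)"
    using cell_less[OF assms(2,1)] assms(3) w_pos by (auto simp: left_of_def)
  then show ?thesis
    using offsets_left_of[OF assms(1,2)] assms(3) by auto
qed

private lemma cell_inj: "inj_on cell {..<n}"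
proof (rule inj_onI)
  fix i j assume "i \<in> {..<n}" "j \<in> {..<n}" "cell i = cell j"
  then show "i = j"
    using offsets_left_of[of i j] cell_less[of i j] cell_less[of j i] w_pos
    by (force simp: left_of_def)
qed

private lemma cell_less_num_cells:
  assumes "k < n"
  shows "cell k < num_cells (2 * C) n"
  unfolding num_cells_def cell_def
proof (rule nat_floor_less_nat_floor)
  have "0 \<le> xs ! k"
    using unit assms by simp
  then have "real n * (offset k + w) \<le> real n * (2 * C)"
    using offset_upper[OF assms] by (intro mult_left_mono) auto
  then show "real n * offset k + 1 \<le> 2 * C * real n"
    using n_w by (simp add: algebra_simps)
qed (use online_translation_nth(2)[OF assms] in simp)

lemma strip_sort_valid: "sort_valid (2 * C) n (strip_sort A n) xs"
  unfolding sort_valid_def strip_sort_positions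
  using cell_less_num_cells cell_inj by (simp add: distinct_map lessThan_atLeast0)

lemma strip_sort_cost: "sort_cost (strip_sort A n) xs \<le> 4 * C - 1"
proof -
  define \<sigma> where "\<sigma> = sort_key (\<lambda>k. sort_positions (strip_sort A n) xs ! k) [0..<n]"
  define ps where "ps = map (\<lambda>k. (offset k, xs ! k)) \<sigma>"
  have set_\<sigma>: "set \<sigma> = {..<n}"
    by (auto simp: \<sigma>_def)
  have "map (\<lambda>k. sort_positions (strip_sort A n) xs ! k) \<sigma> = map cell \<sigma>"
    using set_\<sigma> by (simp add: strip_sort_positions)
  then have "sorted (map cell \<sigma>)"
    using sorted_sort_key unfolding \<sigma>_def by metis
  moreover have "distinct (map cell \<sigma>)"
    using cell_inj set_\<sigma> by (simp add: \<sigma>_def distinct_map)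
  ultimately have "sorted_wrt (<) (map cell \<sigma>)"
    by (simp add: strict_sorted_iff)
  then have "sorted_wrt (\<lambda>u v. cell u < cell v) \<sigma>"
    by (simp add: sorted_wrt_map)
  then have "sorted_wrt (\<lambda>u v. left_of w (offset u, xs ! u) (offset v, xs ! v)) \<sigma>"
  proof (rule sorted_wrt_mono_rel[rotated])
    fix u v assume "u \<in> set \<sigma>" "v \<in> set \<sigma>" "cell u < cell v"
    then show "left_of w (offset u, xs ! u) (offset v, xs ! v)"
      using cell_less_imp_left_of set_\<sigma> by simp
  qed
  then have "sorted_wrt (left_of w) ps"
    by (simp add: ps_def sorted_wrt_map)
  moreover have "\<forall>q\<in>set ps. 0 \<le> fst q \<and> 0 \<le> snd q \<and> snd q \<le> 1 \<and> fst q + snd q + w \<le> 2 * C"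
    using set_\<sigma> unit online_translation_nth(2) offset_upper by (auto simp: ps_def)
  moreover have "length ps = n"
    by (simp add: ps_def \<sigma>_def)
  moreover from this have "ps \<noteq> []"
    using xs_ne by auto
  ultimately have "path_len (0 # map snd ps @ [1]) \<le> 1 + 2 * (2 * C - real n * w)"
    using path_len_left_of_chain_le by metis
  moreover have "sorted_contents (strip_sort A n) xs = map snd ps"
    by (simp add: sorted_contents_def ps_def \<sigma>_def comp_def)
  ultimately show ?thesis
    using n_w by (simp add: sort_cost_def)
qed

end

lemma strip_sort_competitive:
  assumes "strip_competitive C A" "0 \<le> C" "n \<noteq> 0"
  shows "sort_competitive (2 * C) n (4 * C) (strip_sort A n)"
  unfolding sort_competitive_def
proof (intro allI impI)
  fix xs :: "real list" assume xs: "length xs = n \<and> (\<forall>x\<in>set xs. 0 \<le> x \<and> x \<le> 1)"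
  then have "xs \<noteq> []"
    using assms(3) by auto
  with assms(1,2) xs
  show "sort_valid (2 * C) n (strip_sort A n) xs \<and> sort_cost (strip_sort A n) xs \<le> 4 * C"
    using strip_sort_valid strip_sort_cost by fastforce
qed

lemma sort_competitive_0: "1 \<le> \<Delta> \<Longrightarrow> sort_competitive \<gamma> 0 \<Delta> alg"
  by (simp add: sort_competitive_def sort_valid_def sort_positions_def sort_cost_def sorted_contents_def)

theorem lemma7:
  fixes C :: real
  assumes "C \<ge> 1"
    and "\<exists>A. strip_competitive C A"
  shows "\<forall>n. \<exists>alg. sort_competitive (2 * C) n (4 * C) alg"
proof
  fix n :: nat
  obtain A where "strip_competitive C A"
    using assms(2) by blast
  then have "sort_competitive (2 * C) n (4 * C) (strip_sort A n)"
    using strip_sort_competitive[of C A n] sort_competitive_0[of "4 * C"] assms(1)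
    by (cases "n = 0") auto
  then show "\<exists>alg. sort_competitive (2 * C) n (4 * C) alg"
    by blast
qed

end
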